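(* Let $F_1$ and $F_2$ be finite fields with $|F_1|\le|F_2|$ and $\mathrm{char}(F_1)=2$. Then there exists a $(|F_1|-1)\times(|F_2|-1)$ Latin-sum array, with rows indexed by $A=F_1\setminus\{0\}$ and columns indexed by $B=F_2\setminus\{0\}$, over the alphabet $F_2\setminus\{0\}$.
   Context: Let $F_1,F_2$ be finite fields with $|F_1|\le|F_2|$, and let $A\subseteq F_1$, $B\subseteq F_2$ with $|A|\le|B|$. A table $L$ of size $|A|\times|B|$ with entries from a set $C$, whose rows are indexed by the elements of $A$ and columns by the elements of $B$ (entry $L_{x,y}$), is called a Latin-sum array over $C$ if for every two distinct pairs $(x_1,y_1),(x_2,y_2)\in A\times B$: (i) if $x_1+x_2=0$ in $F_1$ then $L_{x_1,y_1}\ne L_{x_2,y_2}$; and (ii) if $y_1+y_2=0$ in $F_2$ then $L_{x_1,y_1}\ne L_{x_2,y_2}$. *)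

theory Defs
  imports Main
begin

definition latin_sum_array ::
  "'a::field set \<Rightarrow> 'b::field set \<Rightarrow> 'c set \<Rightarrow> ('a \<Rightarrow> 'b \<Rightarrow> 'c) \<Rightarrow> bool" where
  "latin_sum_array A B C L \<longleftrightarrow>
     (\<forall>x\<in>A. \<forall>y\<in>B. L x y \<in> C) \<and>
     (\<forall>x1\<in>A. \<forall>y1\<in>B. \<forall>x2\<in>A. \<forall>y2\<in>B. (x1, y1) \<noteq> (x2, y2) \<longrightarrow>
        ((x1 + x2 = 0 \<longrightarrow> L x1 y1 \<noteq> L x2 y2) \<and>
         (y1 + y2 = 0 \<longrightarrow> L x1 y1 \<noteq> L x2 y2)))"

end

theory Submission
  imports Defs
begin

text \<open>In characteristic 2 a condition x1 + x2 = 0 just says x1 = x2, so the constraints of a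
  Latin-sum array become: distinct entries along each row, and, if the column field also has
  characteristic 2, along each column. If it does, the table f x * y with f an injection of
  the rows into the nonzero column elements works; if it does not, y + y \<noteq> 0 for y \<noteq> 0, so
  the column condition is vacuous and the table L x y = y works.\<close>

lemma add_eq_zero_iff_eq_char2:
  fixes x y :: "'a::ring_1"
  assumes "1 + 1 = (0::'a)"
  shows "x + y = 0 \<longleftrightarrow> x = y"
proof -
  have "x + x = x * (1 + 1)"
    by (simp only: distrib_left mult.right_neutral)
  then have "x + x = 0"
    using assms by simp
  then have "- x = x"
    by (simp add: neg_eq_iff_add_eq_0)
  then show ?thesis
    by (metis neg_eq_iff_add_eq_0)
qed

lemma add_self_neq_zero:
  fixes y :: "'a::{semiring_1,semiring_no_zero_divisors}"
  assumes "1 + 1 \<noteq> (0::'a)" and "y \<noteq> 0"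
  shows "y + y \<noteq> 0"
proof -
  have "y + y = (1 + 1) * y"
    by (simp only: distrib_right mult_1)
  then show ?thesis
    using assms by simp
qed

lemma latin_sum_array_scaled:
  fixes A :: "'a::field set" and B :: "'b::field set"
  assumes char2_a: "1 + 1 = (0::'a)" and char2_b: "1 + 1 = (0::'b)"
    and inj: "inj_on f A" and f_nonzero: "\<And>x. x \<in> A \<Longrightarrow> f x \<noteq> 0" and "0 \<notin> B"
  shows "latin_sum_array A B (UNIV - {0}) (\<lambda>x y. f x * y)"
  unfolding latin_sum_array_def
proof (intro conjI ballI impI)
  fix x y assume "x \<in> A" "y \<in> B"
  then show "f x * y \<in> UNIV - {0}"
    using f_nonzero \<open>0 \<notin> B\<close> by auto
next
  fix x1 y1 x2 y2
  assume in_table: "x1 \<in> A" "y1 \<in> B" "x2 \<in> A" "y2 \<in> B" and distinct: "(x1, y1) \<noteq> (x2, y2)"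
  {
    assume "x1 + x2 = 0"
    then have "x1 = x2" "y1 \<noteq> y2"
      using distinct add_eq_zero_iff_eq_char2[OF char2_a] by auto
    then show "f x1 * y1 \<noteq> f x2 * y2"
      using f_nonzero in_table by simp
  }
  {
    assume "y1 + y2 = 0"
    then have "y1 = y2" "x1 \<noteq> x2"
      using distinct add_eq_zero_iff_eq_char2[OF char2_b] by auto
    then have "f x1 \<noteq> f x2"
      using inj in_table by (auto dest: inj_onD)
    then show "f x1 * y1 \<noteq> f x2 * y2"
      using \<open>y1 = y2\<close> in_table \<open>0 \<notin> B\<close> by auto
  }
qed

lemma latin_sum_array_column_index:
  fixes A :: "'a::field set" and B :: "'b::field set"
  assumes char2_a: "1 + 1 = (0::'a)" and odd_char_b: "1 + 1 \<noteq> (0::'b)" and "0 \<notin> B"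
  shows "latin_sum_array A B B (\<lambda>x y. y)"
  unfolding latin_sum_array_def
proof (intro conjI ballI impI)
  fix x1 y1 x2 y2
  assume in_table: "x1 \<in> A" "y1 \<in> B" "x2 \<in> A" "y2 \<in> B" and distinct: "(x1, y1) \<noteq> (x2, y2)"
  show "y1 \<noteq> y2" if "x1 + x2 = 0"
    using that distinct add_eq_zero_iff_eq_char2[OF char2_a] by auto
  show "y1 \<noteq> y2" if "y1 + y2 = 0"
  proof
    assume "y1 = y2"
    moreover have "y2 \<noteq> 0"
      using in_table \<open>0 \<notin> B\<close> by auto
    then have "y2 + y2 \<noteq> 0"
      by (rule add_self_neq_zero[OF odd_char_b])
    ultimately show False
      using that by simp
  qed
qed simp

lemma inj_into_nonzero:
  assumes "card (UNIV :: 'a::{zero,finite} set) \<le> card (UNIV :: 'b::{zero,finite} set)"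
  obtains f where "inj_on f (UNIV - {0::'a})" "f ` (UNIV - {0}) \<subseteq> UNIV - {0::'b}"
proof -
  have "card (UNIV - {0::'a}) \<le> card (UNIV - {0::'b})"
    using assms by (simp add: card_Diff_singleton)
  then show ?thesis
    using card_le_inj[of "UNIV - {0::'a}" "UNIV - {0::'b}"] that by auto
qed

theorem lemma18:
  assumes "card (UNIV :: ('a::{field,finite}) set) \<le> card (UNIV :: ('b::{field,finite}) set)"
    and "(1::'a) + 1 = 0"
  shows "\<exists>L :: 'a \<Rightarrow> 'b \<Rightarrow> 'b.
           latin_sum_array (UNIV - {0::'a}) (UNIV - {0::'b}) (UNIV - {0::'b}) L"
proof (cases "(1::'b) + 1 = 0")
  case True
  obtain f :: "'a \<Rightarrow> 'b" where "inj_on f (UNIV - {0})" "f ` (UNIV - {0}) \<subseteq> UNIV - {0}"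
    using inj_into_nonzero[OF assms(1)] .
  then have "latin_sum_array (UNIV - {0::'a}) (UNIV - {0::'b}) (UNIV - {0}) (\<lambda>x y. f x * y)"
    by (intro latin_sum_array_scaled[OF assms(2) True]) auto
  then show ?thesis by blast
next
  case False
  have "latin_sum_array (UNIV - {0::'a}) (UNIV - {0::'b}) (UNIV - {0}) (\<lambda>x y. y)"
    by (rule latin_sum_array_column_index[OF assms(2) False]) simp
  then show ?thesis by blast
qed

end
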